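(* Let $(G^A_n)_{n\in\mathbb{N}}$ and $(G^B_n)_{n\in\mathbb{N}}$ be bi-iteratively constructible families of graphs. Then the family $(G^A_n\sqcup G^B_n)_{n\in\mathbb{N}}$ of disjoint unions is bi-iteratively constructible. If both families are iteratively constructible, then so is $(G^A_n\sqcup G^B_n)_{n\in\mathbb{N}}$.
   Context: A $k$-graph is $G=(V,E;R_1,\dots,R_k)$ where $(V,E)$ is a finite simple graph (its underlying graph) and $R_1,\dots,R_k$ (the labels, possibly empty) partition $V$. Basic operations on $k$-graphs: $Add_i$ adds a new isolated vertex to $R_i$; $\rho_{i\to j}$ moves all vertices of $R_i$ into $R_j$, leaving $R_i$ empty; $\eta_{i,j}$ adds all edges between $R_i$ and $R_j$; for $b\in\mathbb{N}$, $\eta^b_{i,j}$ acts as $\eta_{i,j}$ if $|R_i\cup R_j|\le b$ and otherwise does nothing; $\delta_{i,j}$ removes all edges between $R_i$ and $R_j$. An elementary operation is a finite composition of basic operations; $id$ is the empty composition. A sequence of $k$-graphs is an $F$-iteration family if $G_{n+1}=F(G_n)$ for all $n$ ($G_0$ a $k$-graph, $F$ elementary), and an $(H,F,L)$-bi-iteration family if $G_{n+1}=H(F^n(L(G_n)))$ for all $n$, $F^n$ denoting $n$-fold application. A sequence of graphs is (bi-)iteratively constructible if for some $k$ it is the sequence of underlying graphs of an iteration (resp. bi-iteration) family of $k$-graphs. *)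

theory Defs
  imports Main
begin

type_synonym 'a graph = "'a set \<times> 'a set set"

definition is_graph :: "'a graph \<Rightarrow> bool" where
  "is_graph G \<longleftrightarrow> finite (fst G) \<and>
     snd G \<subseteq> {{u, v} | u v. u \<in> fst G \<and> v \<in> fst G \<and> u \<noteq> v}"

definition graph_iso :: "'a graph \<Rightarrow> 'b graph \<Rightarrow> bool" where
  "graph_iso G H \<longleftrightarrow> (\<exists>f. bij_betw f (fst G) (fst H) \<and> (\<lambda>e. f ` e) ` snd G = snd H)"

definition disjoint_union :: "'a graph \<Rightarrow> 'b graph \<Rightarrow> ('a + 'b) graph" where
  "disjoint_union G H =
     (Inl ` fst G \<union> Inr ` fst H, (\<lambda>e. Inl ` e) ` snd G \<union> (\<lambda>e. Inr ` e) ` snd H)"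

record kgraph =
  kV :: "nat set"
  kE :: "nat set set"
  klab :: "nat \<Rightarrow> nat"

definition is_kgraph :: "nat \<Rightarrow> kgraph \<Rightarrow> bool" where
  "is_kgraph k G \<longleftrightarrow> is_graph (kV G, kE G) \<and> (\<forall>v \<in> kV G. klab G v \<in> {1..k})"

definition underlying :: "kgraph \<Rightarrow> nat graph" where
  "underlying G = (kV G, kE G)"

definition lclass :: "kgraph \<Rightarrow> nat \<Rightarrow> nat set" where
  "lclass G i = {v \<in> kV G. klab G v = i}"

definition edges_between :: "kgraph \<Rightarrow> nat \<Rightarrow> nat \<Rightarrow> nat set set" where
  "edges_between G i j = {{u, v} | u v. u \<in> lclass G i \<and> v \<in> lclass G j \<and> u \<noteq> v}"

datatype basic_op =
    Add nat
  | Ren nat nat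
  | Eta nat nat
  | EtaB nat nat nat
  | Del nat nat

fun apply_op :: "basic_op \<Rightarrow> kgraph \<Rightarrow> kgraph" where
  "apply_op (Add i) G =
     (let v = (LEAST x. x \<notin> kV G)
      in G\<lparr>kV := insert v (kV G), klab := (klab G)(v := i)\<rparr>)"
| "apply_op (Ren i j) G = G\<lparr>klab := (\<lambda>v. if klab G v = i then j else klab G v)\<rparr>"
| "apply_op (Eta i j) G = G\<lparr>kE := kE G \<union> edges_between G i j\<rparr>"
| "apply_op (EtaB b i j) G =
     (if card (lclass G i \<union> lclass G j) \<le> b
      then G\<lparr>kE := kE G \<union> edges_between G i j\<rparr> else G)"
| "apply_op (Del i j) G = G\<lparr>kE := kE G - edges_between G i j\<rparr>"

fun valid_op :: "nat \<Rightarrow> basic_op \<Rightarrow> bool" where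
  "valid_op k (Add i) \<longleftrightarrow> i \<in> {1..k}"
| "valid_op k (Ren i j) \<longleftrightarrow> i \<in> {1..k} \<and> j \<in> {1..k} \<and> i \<noteq> j"
| "valid_op k (Eta i j) \<longleftrightarrow> i \<in> {1..k} \<and> j \<in> {1..k} \<and> i \<noteq> j"
| "valid_op k (EtaB b i j) \<longleftrightarrow> i \<in> {1..k} \<and> j \<in> {1..k} \<and> i \<noteq> j"
| "valid_op k (Del i j) \<longleftrightarrow> i \<in> {1..k} \<and> j \<in> {1..k} \<and> i \<noteq> j"

text \<open>Elementary operations: finite compositions of basic operations, as lists
(applied left to right); the empty list is id.\<close>

type_synonym elem_op = "basic_op list"

definition valid_elem :: "nat \<Rightarrow> elem_op \<Rightarrow> bool" where
  "valid_elem k F \<longleftrightarrow> (\<forall>op \<in> set F. valid_op k op)"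

definition apply_elem :: "elem_op \<Rightarrow> kgraph \<Rightarrow> kgraph" where
  "apply_elem F G = fold apply_op F G"

definition iteration_family :: "nat \<Rightarrow> (nat \<Rightarrow> kgraph) \<Rightarrow> elem_op \<Rightarrow> bool" where
  "iteration_family k Gs F \<longleftrightarrow> is_kgraph k (Gs 0) \<and> valid_elem k F \<and>
     (\<forall>n. Gs (Suc n) = apply_elem F (Gs n))"

definition bi_iteration_family ::
    "nat \<Rightarrow> (nat \<Rightarrow> kgraph) \<Rightarrow> elem_op \<Rightarrow> elem_op \<Rightarrow> elem_op \<Rightarrow> bool" where
  "bi_iteration_family k Gs H F L \<longleftrightarrow> is_kgraph k (Gs 0) \<and>
     valid_elem k H \<and> valid_elem k F \<and> valid_elem k L \<and>
     (\<forall>n. Gs (Suc n) = apply_elem H ((apply_elem F ^^ n) (apply_elem L (Gs n))))"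

definition iteratively_constructible :: "(nat \<Rightarrow> 'a graph) \<Rightarrow> bool" where
  "iteratively_constructible Gs \<longleftrightarrow>
     (\<exists>k Ks F. iteration_family k Ks F \<and> (\<forall>n. graph_iso (underlying (Ks n)) (Gs n)))"

definition bi_iteratively_constructible :: "(nat \<Rightarrow> 'a graph) \<Rightarrow> bool" where
  "bi_iteratively_constructible Gs \<longleftrightarrow>
     (\<exists>k Ks H F L. bi_iteration_family k Ks H F L \<and>
        (\<forall>n. graph_iso (underlying (Ks n)) (Gs n)))"

end

theory Submission
  imports Defs
begin

text \<open>Run both constructions inside one (k+m)-graph, the labels of the second shifted by k.
Since the two label ranges are disjoint, a basic operation of either construction, relabelled
accordingly, acts on its own copy exactly as on the original graph and leaves the other copy
untouched. Hence the invariant "the graph is the disjoint union of copies of the current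
k-graph and the current m-graph" survives every operation in any interleaving, in particular
the combined steps F_A followed by the shifted F_B. Starting from a disjoint union of the two
initial graphs, the n-th graph is thus isomorphic to the disjoint union of the n-th graphs.\<close>

lemma graph_iso_trans:
  assumes "graph_iso G H" and "graph_iso H K"
  shows "graph_iso G K"
proof -
  obtain f where f: "bij_betw f (fst G) (fst H)" "(\<lambda>e. f ` e) ` snd G = snd H"
    using assms(1) unfolding graph_iso_def by blast
  obtain g where g: "bij_betw g (fst H) (fst K)" "(\<lambda>e. g ` e) ` snd H = snd K"
    using assms(2) unfolding graph_iso_def by blast
  have "bij_betw (g \<circ> f) (fst G) (fst K)"
    using f(1) g(1) by (rule bij_betw_trans)
  moreover have "(\<lambda>e. (g \<circ> f) ` e) ` snd G = snd K"
    unfolding g(2)[symmetric] f(2)[symmetric] by (simp add: image_image image_comp)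
  ultimately show ?thesis
    unfolding graph_iso_def by blast
qed

lemma graph_iso_sym:
  assumes "graph_iso G H" and "snd G \<subseteq> Pow (fst G)"
  shows "graph_iso H G"
proof -
  obtain f where f: "bij_betw f (fst G) (fst H)" and E: "(\<lambda>e. f ` e) ` snd G = snd H"
    using assms(1) unfolding graph_iso_def by blast
  have "inv_into (fst G) f ` f ` e = e" if "e \<in> snd G" for e
    using that assms(2) f by (intro inv_into_image_cancel) (auto simp: bij_betw_def)
  then have "(\<lambda>e. inv_into (fst G) f ` e) ` snd H = snd G"
    unfolding E[symmetric] image_image by simp
  with bij_betw_inv_into[OF f] show ?thesis
    unfolding graph_iso_def by blast
qed

lemma graph_iso_disjoint_union:
  assumes "graph_iso GA GA'" and "graph_iso GB GB'"
  shows "graph_iso (disjoint_union GA GB) (disjoint_union GA' GB')"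
proof -
  obtain \<phi> where \<phi>: "bij_betw \<phi> (fst GA) (fst GA')" "(\<lambda>e. \<phi> ` e) ` snd GA = snd GA'"
    using assms(1) unfolding graph_iso_def by blast
  obtain \<psi> where \<psi>: "bij_betw \<psi> (fst GB) (fst GB')" "(\<lambda>e. \<psi> ` e) ` snd GB = snd GB'"
    using assms(2) unfolding graph_iso_def by blast
  have "inj_on (map_sum \<phi> \<psi>) (Inl ` fst GA \<union> Inr ` fst GB)"
    using \<phi>(1) \<psi>(1)
    by (intro inj_on_inverseI[where g = "map_sum (inv_into (fst GA) \<phi>) (inv_into (fst GB) \<psi>)"])
      (auto simp: bij_betw_def)
  moreover have "map_sum \<phi> \<psi> ` (Inl ` fst GA \<union> Inr ` fst GB) = Inl ` fst GA' \<union> Inr ` fst GB'"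
    by (simp add: image_Un image_image
        flip: bij_betw_imp_surj_on[OF \<phi>(1)] bij_betw_imp_surj_on[OF \<psi>(1)])
  ultimately have "bij_betw (map_sum \<phi> \<psi>) (Inl ` fst GA \<union> Inr ` fst GB) (Inl ` fst GA' \<union> Inr ` fst GB')"
    unfolding bij_betw_def ..
  moreover have "(\<lambda>e. map_sum \<phi> \<psi> ` e) ` ((\<lambda>e. Inl ` e) ` snd GA \<union> (\<lambda>e. Inr ` e) ` snd GB) =
      (\<lambda>e. Inl ` e) ` snd GA' \<union> (\<lambda>e. Inr ` e) ` snd GB'"
    unfolding \<phi>(2)[symmetric] \<psi>(2)[symmetric] by (simp add: image_Un image_image)
  ultimately show ?thesis
    unfolding graph_iso_def disjoint_union_def fst_conv snd_conv by blast
qed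

lemma LEAST_notin_finite:
  fixes S :: "nat set"
  assumes "finite S"
  shows "(LEAST x. x \<notin> S) \<notin> S"
  using assms by (metis LeastI_ex ex_new_if_finite infinite_UNIV_nat)

lemma kgraph_edgeE:
  assumes "is_kgraph k G" and "e \<in> kE G"
  obtains u v where "e = {u, v}" "u \<in> kV G" "v \<in> kV G" "u \<noteq> v"
  using assms by (auto simp: is_kgraph_def is_graph_def)

lemma kgraph_edge_subset: "is_kgraph k G \<Longrightarrow> e \<in> kE G \<Longrightarrow> e \<subseteq> kV G"
  by (metis kgraph_edgeE empty_subsetI insert_subset)

lemma edges_betweenE:
  assumes "e \<in> edges_between G i j"
  obtains u v where "e = {u, v}" "u \<in> kV G" "v \<in> kV G" "u \<noteq> v"
  using assms by (auto simp: edges_between_def lclass_def)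

lemma is_kgraph_apply_op:
  assumes "is_kgraph k G" and "valid_op k op"
  shows "is_kgraph k (apply_op op G)"
proof (cases op)
  case (Add i)
  with assms show ?thesis
    by (auto simp: is_kgraph_def is_graph_def Let_def) blast
next
  case (Eta i j)
  with assms show ?thesis
    by (auto simp: is_kgraph_def is_graph_def elim!: edges_betweenE)
next
  case (EtaB b i j)
  with assms show ?thesis
    by (auto simp: is_kgraph_def is_graph_def elim!: edges_betweenE)
qed (use assms in \<open>auto simp: is_kgraph_def is_graph_def\<close>)

fun shift_op :: "nat \<Rightarrow> basic_op \<Rightarrow> basic_op" where
  "shift_op s (Add i) = Add (i + s)"
| "shift_op s (Ren i j) = Ren (i + s) (j + s)"
| "shift_op s (Eta i j) = Eta (i + s) (j + s)"
| "shift_op s (EtaB b i j) = EtaB b (i + s) (j + s)"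
| "shift_op s (Del i j) = Del (i + s) (j + s)"

lemma valid_op_shift_op: "valid_op k op \<Longrightarrow> s + k \<le> K \<Longrightarrow> valid_op K (shift_op s op)"
  by (cases op) auto

definition shifted_union_via ::
    "nat \<Rightarrow> nat \<Rightarrow> nat \<Rightarrow> nat \<Rightarrow> (nat \<Rightarrow> nat) \<Rightarrow> (nat \<Rightarrow> nat) \<Rightarrow> kgraph \<Rightarrow> kgraph \<Rightarrow> kgraph \<Rightarrow> bool"
  where
  "shifted_union_via sa ka sb kb f g C A B \<longleftrightarrow>
     is_kgraph ka A \<and> is_kgraph kb B \<and> (sa + ka \<le> sb \<or> sb + kb \<le> sa) \<and>
     inj_on f (kV A) \<and> inj_on g (kV B) \<and> f ` kV A \<inter> g ` kV B = {} \<and>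
     kV C = f ` kV A \<union> g ` kV B \<and> kE C = image f ` kE A \<union> image g ` kE B \<and>
     (\<forall>v \<in> kV A. klab C (f v) = klab A v + sa) \<and> (\<forall>v \<in> kV B. klab C (g v) = klab B v + sb)"

definition shifted_union :: "nat \<Rightarrow> nat \<Rightarrow> nat \<Rightarrow> nat \<Rightarrow> kgraph \<Rightarrow> kgraph \<Rightarrow> kgraph \<Rightarrow> bool" where
  "shifted_union sa ka sb kb C A B \<longleftrightarrow> (\<exists>f g. shifted_union_via sa ka sb kb f g C A B)"

lemma shifted_union_via_swap:
  "shifted_union_via sa ka sb kb f g C A B \<Longrightarrow> shifted_union_via sb kb sa ka g f C B A"
  by (auto simp: shifted_union_via_def)

lemma lclass_shifted_union_via:
  assumes "shifted_union_via sa ka sb kb f g C A B" and "i \<in> {1..ka}"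
  shows "lclass C (i + sa) = f ` lclass A i"
  using assms unfolding shifted_union_via_def lclass_def is_kgraph_def by auto

lemma doubletons_image:
  assumes "inj_on f V" and "X \<subseteq> V" and "Y \<subseteq> V"
  shows "{{u, v} | u v. u \<in> f ` X \<and> v \<in> f ` Y \<and> u \<noteq> v} =
         image f ` {{u, v} | u v. u \<in> X \<and> v \<in> Y \<and> u \<noteq> v}"
proof (intro equalityI subsetI)
  fix e assume "e \<in> {{u, v} | u v. u \<in> f ` X \<and> v \<in> f ` Y \<and> u \<noteq> v}"
  then obtain a b where "a \<in> X" "b \<in> Y" "f a \<noteq> f b" "e = {f a, f b}" by blast
  then show "e \<in> image f ` {{u, v} | u v. u \<in> X \<and> v \<in> Y \<and> u \<noteq> v}"
    by (intro image_eqI[of _ _ "{a, b}"]) auto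
next
  fix e assume "e \<in> image f ` {{u, v} | u v. u \<in> X \<and> v \<in> Y \<and> u \<noteq> v}"
  then obtain a b where ab: "a \<in> X" "b \<in> Y" "a \<noteq> b" "e = {f a, f b}" by blast
  then have "f a \<noteq> f b" using assms by (meson inj_on_eq_iff subsetD)
  with ab show "e \<in> {{u, v} | u v. u \<in> f ` X \<and> v \<in> f ` Y \<and> u \<noteq> v}" by blast
qed

lemma edges_between_shifted_union_via:
  assumes "shifted_union_via sa ka sb kb f g C A B" and "i \<in> {1..ka}" and "j \<in> {1..ka}"
  shows "edges_between C (i + sa) (j + sa) = image f ` edges_between A i j"
  unfolding edges_between_def lclass_shifted_union_via[OF assms(1,2)]
    lclass_shifted_union_via[OF assms(1,3)]
  by (rule doubletons_image[of f "kV A"]) (use assms(1) in \<open>auto simp: shifted_union_via_def lclass_def\<close>)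

lemma shifted_union_via_Add:
  assumes S: "shifted_union_via sa ka sb kb f g C A B" and V: "valid_op ka (Add i)"
  defines "a \<equiv> LEAST x. x \<notin> kV A" and "c \<equiv> LEAST x. x \<notin> kV C"
  shows "shifted_union_via sa ka sb kb (f(a := c)) g (apply_op (Add (i + sa)) C) (apply_op (Add i) A) B"
proof -
  have fin: "finite (kV A)" "finite (kV C)"
    using S by (auto simp: shifted_union_via_def is_kgraph_def is_graph_def)
  have a: "a \<notin> kV A" and c: "c \<notin> f ` kV A" "c \<notin> g ` kV B"
    using LEAST_notin_finite[OF fin(1)] LEAST_notin_finite[OF fin(2)] S
    unfolding a_def c_def shifted_union_via_def by auto
  have agree: "(f(a := c)) v = f v" if "v \<in> kV A" for v
    using a that by auto
  have C': "apply_op (Add (i + sa)) C = C\<lparr>kV := insert c (kV C), klab := (klab C)(c := i + sa)\<rparr>"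
    by (simp add: Let_def c_def)
  have A': "apply_op (Add i) A = A\<lparr>kV := insert a (kV A), klab := (klab A)(a := i)\<rparr>"
    by (simp add: Let_def a_def)
  have "is_kgraph ka (apply_op (Add i) A)"
    by (rule is_kgraph_apply_op) (use S V in \<open>auto simp: shifted_union_via_def\<close>)
  moreover have "inj_on (f(a := c)) (insert a (kV A))"
    using S a c by (auto simp: shifted_union_via_def inj_on_def)
  moreover have "f(a := c) ` insert a (kV A) = insert c (f ` kV A)"
    using a by auto
  moreover have "image (f(a := c)) ` kE A = image f ` kE A"
  proof (rule image_cong[OF refl])
    fix e assume "e \<in> kE A"
    then have "e \<subseteq> kV A"
      using S kgraph_edge_subset by (auto simp: shifted_union_via_def)
    then show "f(a := c) ` e = f ` e"
      using agree by (meson image_cong subsetD)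
  qed
  moreover have "\<forall>v \<in> insert a (kV A). ((klab C)(c := i + sa)) ((f(a := c)) v) = ((klab A)(a := i)) v + sa"
    using S c by (auto simp: shifted_union_via_def)
  moreover have "\<forall>v \<in> kV B. ((klab C)(c := i + sa)) (g v) = klab B v + sb"
    using S c by (auto simp: shifted_union_via_def)
  ultimately show ?thesis
    using S c unfolding C' A' shifted_union_via_def by (simp add: insert_commute)
qed

lemma shifted_union_via_Ren:
  assumes S: "shifted_union_via sa ka sb kb f g C A B" and V: "valid_op ka (Ren i j)"
  shows "shifted_union_via sa ka sb kb f g (apply_op (Ren (i + sa) (j + sa)) C) (apply_op (Ren i j) A) B"
proof -
  have "is_kgraph ka (apply_op (Ren i j) A)"
    by (rule is_kgraph_apply_op) (use S V in \<open>auto simp: shifted_union_via_def\<close>)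
  with S V show ?thesis
    by (auto simp: shifted_union_via_def is_kgraph_def)
qed

lemma shifted_union_via_Eta:
  assumes S: "shifted_union_via sa ka sb kb f g C A B" and V: "valid_op ka (Eta i j)"
  shows "shifted_union_via sa ka sb kb f g (apply_op (Eta (i + sa) (j + sa)) C) (apply_op (Eta i j) A) B"
proof -
  have "is_kgraph ka (apply_op (Eta i j) A)"
    by (rule is_kgraph_apply_op) (use S V in \<open>auto simp: shifted_union_via_def\<close>)
  with S V edges_between_shifted_union_via[OF S, of i j] show ?thesis
    by (auto simp: shifted_union_via_def)
qed

lemma shifted_union_via_EtaB:
  assumes S: "shifted_union_via sa ka sb kb f g C A B" and V: "valid_op ka (EtaB b i j)"
  shows "shifted_union_via sa ka sb kb f g (apply_op (EtaB b (i + sa) (j + sa)) C) (apply_op (EtaB b i j) A) B"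
proof -
  have "lclass C (i + sa) \<union> lclass C (j + sa) = f ` (lclass A i \<union> lclass A j)"
    using lclass_shifted_union_via[OF S] V by auto
  moreover have "inj_on f (lclass A i \<union> lclass A j)"
    using S by (auto simp: shifted_union_via_def lclass_def intro: inj_on_subset)
  ultimately have "card (lclass C (i + sa) \<union> lclass C (j + sa)) = card (lclass A i \<union> lclass A j)"
    by (simp add: card_image)
  moreover have "is_kgraph ka (apply_op (EtaB b i j) A)"
    by (rule is_kgraph_apply_op) (use S V in \<open>auto simp: shifted_union_via_def\<close>)
  ultimately show ?thesis
    using S V edges_between_shifted_union_via[OF S, of i j] by (auto simp: shifted_union_via_def)
qed

lemma shifted_union_via_Del:
  assumes S: "shifted_union_via sa ka sb kb f g C A B" and V: "valid_op ka (Del i j)"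
  shows "shifted_union_via sa ka sb kb f g (apply_op (Del (i + sa) (j + sa)) C) (apply_op (Del i j) A) B"
proof -
  have EC: "kE C = image f ` kE A \<union> image g ` kE B" and inj: "inj_on f (kV A)"
    and disj: "f ` kV A \<inter> g ` kV B = {}" and KA: "is_kgraph ka A" and KB: "is_kgraph kb B"
    using S by (auto simp: shifted_union_via_def)
  have EB: "edges_between C (i + sa) (j + sa) = image f ` edges_between A i j"
    using edges_between_shifted_union_via[OF S] V by auto
  have edges_A: "kE A \<subseteq> Pow (kV A)" "edges_between A i j \<subseteq> Pow (kV A)"
    using kgraph_edge_subset[OF KA] by (auto elim: edges_betweenE)
  have diff: "image f ` (kE A - edges_between A i j) = image f ` kE A - image f ` edges_between A i j"
    using inj_on_image_Pow[OF inj] edges_A by (intro inj_on_image_set_diff) auto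
  have disj_edges: "image g ` kE B \<inter> image f ` edges_between A i j = {}"
  proof (rule ccontr)
    assume "image g ` kE B \<inter> image f ` edges_between A i j \<noteq> {}"
    then obtain e e' where e: "e \<in> kE B" "e' \<in> edges_between A i j" "g ` e = f ` e'" by blast
    then obtain u where "u \<in> e'" "u \<in> kV A" by (metis edges_betweenE insertI1)
    with e kgraph_edge_subset[OF KB] have "f u \<in> f ` kV A \<inter> g ` kV B" by blast
    with disj show False by blast
  qed
  have "kE C - edges_between C (i + sa) (j + sa) =
      image f ` (kE A - edges_between A i j) \<union> image g ` kE B"
    unfolding EC EB diff using disj_edges by blast
  moreover have "is_kgraph ka (apply_op (Del i j) A)"
    by (rule is_kgraph_apply_op) (use KA V in auto)
  ultimately show ?thesis
    using S by (auto simp: shifted_union_via_def)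
qed

lemma shifted_union_apply_op:
  assumes "shifted_union sa ka sb kb C A B" and "valid_op ka op"
  shows "shifted_union sa ka sb kb (apply_op (shift_op sa op) C) (apply_op op A) B"
proof -
  obtain f g where S: "shifted_union_via sa ka sb kb f g C A B"
    using assms(1) unfolding shifted_union_def by blast
  have "\<exists>f'. shifted_union_via sa ka sb kb f' g (apply_op (shift_op sa op) C) (apply_op op A) B"
    using assms(2) shifted_union_via_Add[OF S] shifted_union_via_Ren[OF S]
      shifted_union_via_Eta[OF S] shifted_union_via_EtaB[OF S] shifted_union_via_Del[OF S]
    by (cases op) (simp_all only: shift_op.simps, blast+)
  then show ?thesis
    unfolding shifted_union_def by blast
qed

lemma shifted_union_swap:
  "shifted_union sa ka sb kb C A B \<longleftrightarrow> shifted_union sb kb sa ka C B A"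
  unfolding shifted_union_def by (metis shifted_union_via_swap)

lemma shifted_union_apply_elem:
  assumes "shifted_union sa ka sb kb C A B" and "valid_elem ka F"
  shows "shifted_union sa ka sb kb (apply_elem (map (shift_op sa) F) C) (apply_elem F A) B"
  using assms
proof (induction F arbitrary: C A)
  case Nil
  then show ?case by (simp add: apply_elem_def)
next
  case (Cons op F)
  have "valid_op ka op" and "valid_elem ka F"
    using Cons.prems(2) by (auto simp: valid_elem_def)
  with Cons.IH[OF shifted_union_apply_op[OF Cons.prems(1)]] show ?case
    by (simp add: apply_elem_def)
qed

definition combine_ops :: "nat \<Rightarrow> nat \<Rightarrow> elem_op \<Rightarrow> elem_op \<Rightarrow> elem_op" where
  "combine_ops sa sb FA FB = map (shift_op sa) FA @ map (shift_op sb) FB"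

lemma valid_elem_combine_ops:
  assumes "valid_elem ka FA" and "valid_elem kb FB" and "sa + ka \<le> K" and "sb + kb \<le> K"
  shows "valid_elem K (combine_ops sa sb FA FB)"
  using assms valid_op_shift_op by (auto simp: valid_elem_def combine_ops_def)

lemma shifted_union_apply_combine_ops:
  assumes "shifted_union sa ka sb kb C A B" and "valid_elem ka FA" and "valid_elem kb FB"
  shows "shifted_union sa ka sb kb (apply_elem (combine_ops sa sb FA FB) C) (apply_elem FA A) (apply_elem FB B)"
proof -
  have "shifted_union sa ka sb kb (apply_elem (map (shift_op sa) FA) C) (apply_elem FA A) B"
    using assms(1,2) by (rule shifted_union_apply_elem)
  then have "shifted_union sb kb sa ka (apply_elem (map (shift_op sb) FB) (apply_elem (map (shift_op sa) FA) C))
      (apply_elem FB B) (apply_elem FA A)"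
    using assms(3) by (subst (asm) shifted_union_swap) (rule shifted_union_apply_elem)
  then show ?thesis
    by (simp add: shifted_union_swap combine_ops_def apply_elem_def)
qed

lemma shifted_union_funpow_combine_ops:
  assumes "shifted_union sa ka sb kb C A B" and "valid_elem ka FA" and "valid_elem kb FB"
  shows "shifted_union sa ka sb kb ((apply_elem (combine_ops sa sb FA FB) ^^ n) C)
           ((apply_elem FA ^^ n) A) ((apply_elem FB ^^ n) B)"
  by (induction n) (simp_all add: assms shifted_union_apply_combine_ops)

lemma is_kgraph_shifted_union:
  assumes "shifted_union sa ka sb kb C A B" and "sa + ka \<le> K" and "sb + kb \<le> K"
  shows "is_kgraph K C"
proof -
  obtain f g where S: "shifted_union_via sa ka sb kb f g C A B"
    using assms(1) unfolding shifted_union_def by blast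
  then have KA: "is_kgraph ka A" and KB: "is_kgraph kb B"
    by (auto simp: shifted_union_via_def)
  have edge: "image h ` kE G \<subseteq> {{u, v} | u v. u \<in> h ` kV G \<and> v \<in> h ` kV G \<and> u \<noteq> v}"
    if G: "is_kgraph k G" and h: "inj_on h (kV G)" for h :: "nat \<Rightarrow> nat" and k G
  proof
    fix e assume "e \<in> image h ` kE G"
    then obtain e' where e': "e' \<in> kE G" "e = h ` e'" by blast
    obtain u v where "e' = {u, v}" "u \<in> kV G" "v \<in> kV G" "u \<noteq> v"
      using kgraph_edgeE[OF G e'(1)] .
    with e'(2) h show "e \<in> {{u, v} | u v. u \<in> h ` kV G \<and> v \<in> h ` kV G \<and> u \<noteq> v}"
      by (auto dest: inj_onD)
  qed
  have "finite (kV C)"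
    using S KA KB by (auto simp: shifted_union_via_def is_kgraph_def is_graph_def)
  moreover have "kE C \<subseteq> {{u, v} | u v. u \<in> kV C \<and> v \<in> kV C \<and> u \<noteq> v}"
  proof -
    have EC: "kE C = image f ` kE A \<union> image g ` kE B"
      and sub: "f ` kV A \<subseteq> kV C" "g ` kV B \<subseteq> kV C"
      and inj: "inj_on f (kV A)" "inj_on g (kV B)"
      using S by (auto simp: shifted_union_via_def)
    have mono: "{{u, v} | u v. u \<in> X \<and> v \<in> X \<and> u \<noteq> v} \<subseteq> {{u, v} | u v. u \<in> kV C \<and> v \<in> kV C \<and> u \<noteq> v}"
      if "X \<subseteq> kV C" for X
      using that by blast
    show ?thesis
      unfolding EC using edge[OF KA inj(1)] edge[OF KB inj(2)] mono[OF sub(1)] mono[OF sub(2)]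
      by (meson Un_least subset_trans)
  qed
  moreover have "\<forall>v \<in> kV C. klab C v \<in> {1..K}"
    using S KA KB assms(2,3) by (fastforce simp: shifted_union_via_def is_kgraph_def)
  ultimately show ?thesis
    by (simp add: is_kgraph_def is_graph_def)
qed

definition interleave :: "nat \<Rightarrow> kgraph \<Rightarrow> kgraph \<Rightarrow> kgraph" where
  "interleave k A B =
     \<lparr>kV = (\<lambda>v. 2 * v) ` kV A \<union> (\<lambda>v. 2 * v + 1) ` kV B,
      kE = image (\<lambda>v. 2 * v) ` kE A \<union> image (\<lambda>v. 2 * v + 1) ` kE B,
      klab = (\<lambda>x. if even x then klab A (x div 2) else klab B (x div 2) + k)\<rparr>"

lemma shifted_union_interleave:
  assumes "is_kgraph k A" and "is_kgraph m B"
  shows "shifted_union 0 k k m (interleave k A B) A B"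
proof -
  have "(\<lambda>v. 2 * v) ` kV A \<inter> (\<lambda>v. 2 * v + 1) ` kV B = {}"
    by auto presburger
  with assms have "shifted_union_via 0 k k m (\<lambda>v. 2 * v) (\<lambda>v. 2 * v + 1) (interleave k A B) A B"
    by (simp add: shifted_union_via_def interleave_def inj_on_def)
  then show ?thesis
    unfolding shifted_union_def by blast
qed

lemma graph_iso_shifted_union_via:
  assumes S: "shifted_union_via sa ka sb kb f g C A B"
  shows "graph_iso (disjoint_union (underlying A) (underlying B)) (underlying C)"
proof -
  have inj: "inj_on f (kV A)" "inj_on g (kV B)" and disj: "f ` kV A \<inter> g ` kV B = {}"
    and VC: "kV C = f ` kV A \<union> g ` kV B" and EC: "kE C = image f ` kE A \<union> image g ` kE B"
    using S by (auto simp: shifted_union_via_def)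
  have "inj_on (case_sum f g) (Inl ` kV A \<union> Inr ` kV B)"
  proof (rule inj_onI)
    fix x y
    assume "x \<in> Inl ` kV A \<union> Inr ` kV B" "y \<in> Inl ` kV A \<union> Inr ` kV B"
      and "case_sum f g x = case_sum f g y"
    then show "x = y"
      using inj disj by (auto dest: inj_onD) blast
  qed
  moreover have "case_sum f g ` (Inl ` kV A \<union> Inr ` kV B) = kV C"
    unfolding VC image_Un image_image by simp
  moreover have "(\<lambda>e. case_sum f g ` e) ` ((\<lambda>e. Inl ` e) ` kE A \<union> (\<lambda>e. Inr ` e) ` kE B) = kE C"
    unfolding EC image_Un image_image by simp
  ultimately show ?thesis
    unfolding graph_iso_def disjoint_union_def underlying_def bij_betw_def fst_conv snd_conv by blast
qed

lemma graph_iso_shifted_union: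
  assumes "shifted_union sa ka sb kb C A B"
    and "graph_iso (underlying A) GA" and "graph_iso (underlying B) GB"
  shows "graph_iso (underlying C) (disjoint_union GA GB)"
proof -
  obtain f g where S: "shifted_union_via sa ka sb kb f g C A B"
    using assms(1) unfolding shifted_union_def by blast
  then have "kE A \<subseteq> Pow (kV A)" and "kE B \<subseteq> Pow (kV B)"
    using kgraph_edge_subset[of ka A] kgraph_edge_subset[of kb B]
    by (auto simp: shifted_union_via_def)
  then have "snd (disjoint_union (underlying A) (underlying B)) \<subseteq> Pow (fst (disjoint_union (underlying A) (underlying B)))"
    by (fastforce simp: disjoint_union_def underlying_def)
  with graph_iso_shifted_union_via[OF S]
  have "graph_iso (underlying C) (disjoint_union (underlying A) (underlying B))"
    by (rule graph_iso_sym)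
  then show ?thesis
    using graph_iso_disjoint_union[OF assms(2,3)] by (rule graph_iso_trans)
qed

lemma iteration_family_funpow:
  "iteration_family k Ks F \<Longrightarrow> Ks n = (apply_elem F ^^ n) (Ks 0)"
  by (induction n) (simp_all add: iteration_family_def)

lemma iteratively_constructible_disjoint_union:
  assumes "iteratively_constructible GA" and "iteratively_constructible GB"
  shows "iteratively_constructible (\<lambda>n. disjoint_union (GA n) (GB n))"
proof -
  obtain k KA FA where A: "iteration_family k KA FA"
    and isoA: "\<forall>n. graph_iso (underlying (KA n)) (GA n)"
    using assms(1) unfolding iteratively_constructible_def by blast
  obtain m KB FB where B: "iteration_family m KB FB"
    and isoB: "\<forall>n. graph_iso (underlying (KB n)) (GB n)"
    using assms(2) unfolding iteratively_constructible_def by blast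
  define F where "F = combine_ops 0 k FA FB"
  define Ks where "Ks n = (apply_elem F ^^ n) (interleave k (KA 0) (KB 0))" for n
  have U: "shifted_union 0 k k m (Ks n) (KA n) (KB n)" for n
    unfolding Ks_def F_def iteration_family_funpow[OF A, of n] iteration_family_funpow[OF B, of n]
    using A B
    by (intro shifted_union_funpow_combine_ops shifted_union_interleave) (auto simp: iteration_family_def)
  have "iteration_family (k + m) Ks F"
    using is_kgraph_shifted_union[OF U[of 0]] valid_elem_combine_ops A B
    by (auto simp: iteration_family_def Ks_def F_def)
  moreover have "\<forall>n. graph_iso (underlying (Ks n)) (disjoint_union (GA n) (GB n))"
    using graph_iso_shifted_union[OF U] isoA isoB by blast
  ultimately show ?thesis
    unfolding iteratively_constructible_def by blast
qed

lemma bi_iteratively_constructible_disjoint_union: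
  assumes "bi_iteratively_constructible GA" and "bi_iteratively_constructible GB"
  shows "bi_iteratively_constructible (\<lambda>n. disjoint_union (GA n) (GB n))"
proof -
  obtain k KA HA FA LA where A: "bi_iteration_family k KA HA FA LA"
    and isoA: "\<forall>n. graph_iso (underlying (KA n)) (GA n)"
    using assms(1) unfolding bi_iteratively_constructible_def by blast
  obtain m KB HB FB LB where B: "bi_iteration_family m KB HB FB LB"
    and isoB: "\<forall>n. graph_iso (underlying (KB n)) (GB n)"
    using assms(2) unfolding bi_iteratively_constructible_def by blast
  have valid: "valid_elem k HA" "valid_elem k FA" "valid_elem k LA" "is_kgraph k (KA 0)"
    "valid_elem m HB" "valid_elem m FB" "valid_elem m LB" "is_kgraph m (KB 0)"
    using A B by (auto simp: bi_iteration_family_def)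
  define H where "H = combine_ops 0 k HA HB"
  define F where "F = combine_ops 0 k FA FB"
  define L where "L = combine_ops 0 k LA LB"
  define Ks where "Ks = rec_nat (interleave k (KA 0) (KB 0))
    (\<lambda>n G. apply_elem H ((apply_elem F ^^ n) (apply_elem L G)))"
  have U: "shifted_union 0 k k m (Ks n) (KA n) (KB n)" for n
  proof (induction n)
    case 0
    show ?case
      unfolding Ks_def using valid by (simp add: shifted_union_interleave)
  next
    case (Suc n)
    then show ?case
      using A B valid unfolding Ks_def H_def F_def L_def bi_iteration_family_def
      by (simp add: shifted_union_apply_combine_ops shifted_union_funpow_combine_ops)
  qed
  have "bi_iteration_family (k + m) Ks H F L"
    using is_kgraph_shifted_union[OF U[of 0]] valid_elem_combine_ops valid
    by (simp add: bi_iteration_family_def Ks_def H_def F_def L_def)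
  moreover have "\<forall>n. graph_iso (underlying (Ks n)) (disjoint_union (GA n) (GB n))"
    using graph_iso_shifted_union[OF U] isoA isoB by blast
  ultimately show ?thesis
    unfolding bi_iteratively_constructible_def by blast
qed

theorem mainTheorem11:
  fixes GA :: "nat \<Rightarrow> 'a graph" and GB :: "nat \<Rightarrow> 'b graph"
  shows "(bi_iteratively_constructible GA \<and> bi_iteratively_constructible GB \<longrightarrow>
            bi_iteratively_constructible (\<lambda>n. disjoint_union (GA n) (GB n))) \<and>
         (iteratively_constructible GA \<and> iteratively_constructible GB \<longrightarrow>
            iteratively_constructible (\<lambda>n. disjoint_union (GA n) (GB n)))"
  using bi_iteratively_constructible_disjoint_union iteratively_constructible_disjoint_union
  by blast

end
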